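(* Let $k\ge2$, $\alpha_1,\dots,\alpha_k\in[0,2\pi)$ and let $n_1,\dots,n_k$ be positive integers with $n_i\ne n_{i+1}$ for every $i\in\{1,\dots,k-1\}$. Then there exists $\phi\in[0,2\pi)$ such that $$V\big(\cos(\alpha_1+\phi n_1),\dots,\cos(\alpha_k+\phi n_k)\big)\ \ge\ \frac{k-1}{8}.$$
   Context: For real numbers $r_1,\dots,r_k$, $V(r_1,\dots,r_k):=|\{i\in\{1,\dots,k-1\}:r_ir_{i+1}<0\}|$ is the number of sign variations. *)

theory Defs
  imports Complex_Main
begin

definition sign_variations :: "real list \<Rightarrow> nat" where
  "sign_variations rs = card {i. i + 1 < length rs \<and> rs ! i * rs ! (i + 1) < 0}"

end

theory Submission
  imports Defs "HOL-Analysis.Continuum_Not_Denumerable"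
begin

text \<open>
  Sample \<open>\<phi>\<close> on the grid \<open>\<phi>\<^sub>0 + 2\<pi>j/N\<close>, \<open>j < N\<close>, where \<open>N = n\<^sub>1\<cdots>n\<^sub>k\<close> and \<open>\<phi>\<^sub>0\<close> avoids the
  countably many zeros of all the cosines. Fix an adjacent pair with \<open>p = n\<^sub>i < q = n\<^sub>i\<^sub>+\<^sub>1\<close>.
  Splitting the grid by residues modulo \<open>N/q\<close>, the second cosine is constant on each class
  while the first runs through \<open>cos (x + 2\<pi>pt/q)\<close>, \<open>t < q\<close>. Over such a progression
  \<open>\<Sum> c = 0\<close> and \<open>\<Sum> c\<^sup>2 = q/2\<close> (unless \<open>2p = q\<close>, when the signs simply alternate), and since
  \<open>[c < 0] \<ge> (c\<^sup>2 - c)/2\<close> for \<open>\<bar>c\<bar> \<le> 1\<close>, at least a quarter of the terms are negative. Hence each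
  pair changes sign at \<open>\<ge> N/4\<close> grid points, and some grid point carries at least the
  average \<open>(k - 1)/4\<close> sign variations.
\<close>

lemma sum_cos_arith_progression_eq_0:
  fixes y :: real and d M :: nat
  assumes "0 < M" "\<not> M dvd d"
  shows "(\<Sum>t<M. cos (y + 2*pi*real d*real t/real M)) = 0"
proof -
  define b where "b = pi*real d/real M"
  have "sin b \<noteq> 0"
  proof
    assume "sin b = 0"
    then obtain i :: int where "b = of_int i * pi" using sin_zero_iff_int2 by blast
    then have "real d = of_int i * real M" using assms(1) by (simp add: b_def field_simps)
    then have "int d = i * int M" by (metis of_int_eq_iff of_int_mult of_int_of_nat_eq)
    then show False using assms(2) by (metis dvd_triv_right int_dvd_int_iff)
  qed
  define f where "f t = sin (y + b*(2*real t - 1))" for t :: nat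
  \<comment> \<open>product-to-sum: \<open>2 sin b cos z = sin (z + b) - sin (z - b)\<close> makes the sum telescope\<close>
  have step: "2*sin b * cos (y + 2*pi*real d*real t/real M) = f (Suc t) - f t" for t
  proof -
    have e: "2*pi*real d*real t/real M = 2*b*real t" by (simp add: b_def)
    have "f (Suc t) = sin ((y + 2*b*real t) + b)" "f t = sin ((y + 2*b*real t) - b)"
      by (simp_all add: f_def algebra_simps)
    then show ?thesis unfolding e by (simp add: sin_add sin_diff)
  qed
  have "f M = sin ((y - b) + real (2*d) * pi)"
    using assms(1) by (simp add: f_def b_def field_simps)
  then have period: "f M = f 0" by (simp add: f_def sin_add)
  have "2*sin b * (\<Sum>t<M. cos (y + 2*pi*real d*real t/real M)) = f M - f 0"
    by (simp add: sum_distrib_left step sum_lessThan_telescope)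
  then show ?thesis using period \<open>sin b \<noteq> 0\<close> by simp
qed

lemma sum_cos_sq_arith_progression:
  fixes y :: real and d M :: nat
  assumes "0 < M" "\<not> M dvd 2*d"
  shows "(\<Sum>t<M. (cos (y + 2*pi*real d*real t/real M))\<^sup>2) = real M / 2"
proof -
  have "(cos (y + 2*pi*real d*real t/real M))\<^sup>2
      = (1 + cos (2*y + 2*pi*real (2*d)*real t/real M)) / 2" for t
  proof -
    have e: "2*y + 2*pi*real (2*d)*real t/real M = 2 * (y + 2*pi*real d*real t/real M)"
      by (simp add: field_simps)
    show ?thesis unfolding e cos_double_cos by simp
  qed
  then have "(\<Sum>t<M. (cos (y + 2*pi*real d*real t/real M))\<^sup>2)
      = (\<Sum>t<M. (1 + cos (2*y + 2*pi*real (2*d)*real t/real M)) / 2)"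
    by (rule sum.cong[OF refl])
  also have "\<dots> = (real M + (\<Sum>t<M. cos (2*y + 2*pi*real (2*d)*real t/real M))) / 2"
    by (simp add: sum_divide_distrib[symmetric] sum.distrib)
  also have "\<dots> = real M / 2"
    unfolding sum_cos_arith_progression_eq_0[OF assms] by simp
  finally show ?thesis .
qed

lemma quarter_card_le_sum_negative:
  fixes c :: "'a \<Rightarrow> real"
  assumes "\<And>t. t \<in> A \<Longrightarrow> \<bar>c t\<bar> \<le> 1"
    and "(\<Sum>t\<in>A. c t) = 0" and "(\<Sum>t\<in>A. (c t)\<^sup>2) = real (card A) / 2"
  shows "real (card A) / 4 \<le> (\<Sum>t\<in>A. of_bool (c t < 0))"
proof -
  have "((c t)\<^sup>2 - c t) / 2 \<le> of_bool (c t < 0)" if "t \<in> A" for t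
  proof (cases "c t < 0")
    case True
    then show ?thesis using assms(1)[OF that] abs_square_le_1[of "c t"] by simp
  next
    case False
    then have "c t * c t \<le> c t * 1" using assms(1)[OF that] by (intro mult_left_mono) auto
    then show ?thesis using False by (simp add: power2_eq_square)
  qed
  then have "(\<Sum>t\<in>A. ((c t)\<^sup>2 - c t) / 2) \<le> (\<Sum>t\<in>A. of_bool (c t < 0))"
    by (rule sum_mono)
  moreover have "(\<Sum>t\<in>A. ((c t)\<^sup>2 - c t) / 2) = real (card A) / 4"
    by (simp add: sum_divide_distrib[symmetric] sum_subtractf assms(2,3))
  ultimately show ?thesis by simp
qed

lemma sum_alternating_negative:
  fixes c :: real
  assumes "c \<noteq> 0"
  shows "(\<Sum>t<2*p. of_bool ((-1)^t * c < 0) :: real) = real p"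
proof (induction p)
  case (Suc p)
  have "of_bool (c < 0) + of_bool (- c < 0) = (1::real)" using assms by auto
  then show ?case using Suc by (simp add: mult_2)
qed simp

lemma quarter_le_count_negative_cos:
  fixes x :: real and p q :: nat
  assumes "0 < p" "p < q" "2*p = q \<Longrightarrow> cos x \<noteq> 0"
  shows "real q / 4 \<le> (\<Sum>t<q. of_bool (cos (x + 2*pi*real p*real t/real q) < 0))"
proof (cases "2*p = q")
  case True
  have "x + 2*pi*real p*real t/real q = x + real t * pi" for t
    using assms(1) by (simp add: field_simps flip: True)
  then have "cos (x + 2*pi*real p*real t/real q) = (-1)^t * cos x" for t
    by (simp add: cos_add)
  then show ?thesis
    using sum_alternating_negative[OF assms(3)[OF True], of p] True by simp
next
  case False
  have "\<not> q dvd p" using assms by (meson nat_dvd_not_less)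
  moreover have "\<not> q dvd 2*p"
  proof
    assume "q dvd 2*p"
    then obtain r where r: "2*p = q*r" by (elim dvdE)
    then have "q * r < q * 2" using assms(2) by linarith
    moreover have "0 < r" using r assms(1) by (cases r) auto
    ultimately have "r = 1" by simp
    then show False using r False by simp
  qed
  ultimately show ?thesis
    using assms(2) quarter_card_le_sum_negative[of "{..<q}" "\<lambda>t. cos (x + 2*pi*real p*real t/real q)"]
    by (simp add: sum_cos_arith_progression_eq_0 sum_cos_sq_arith_progression)
qed

lemma sum_lessThan_mult_by_residue:
  fixes h :: "nat \<Rightarrow> 'a::comm_monoid_add"
  shows "(\<Sum>j<q*s. h j) = (\<Sum>u<s. \<Sum>t<q. h (u + s*t))"
proof -
  have "(\<Sum>j<q*s. h j) = (\<Sum>t<q. \<Sum>j\<in>{t*s..<t*s+s}. h j)"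
    by (rule sum.nat_group[symmetric])
  also have "\<dots> = (\<Sum>t<q. \<Sum>u<s. h (u + s*t))"
    by (simp add: sum.atLeastLessThan_shift_0 atLeast0LessThan o_def add.commute mult.commute)
  finally show ?thesis by (rule trans) (rule sum.swap)
qed

lemma quarter_le_grid_sign_changes_less:
  fixes a b \<phi>\<^sub>0 :: real and p q N :: nat
  assumes "0 < p" "p < q" "q dvd N"
    and "\<And>j. cos (a + (\<phi>\<^sub>0 + 2*pi*real j/real N) * real p) \<noteq> 0"
    and "\<And>j. cos (b + (\<phi>\<^sub>0 + 2*pi*real j/real N) * real q) \<noteq> 0"
  shows "real N / 4 \<le> (\<Sum>j<N. of_bool (cos (a + (\<phi>\<^sub>0 + 2*pi*real j/real N) * real p) *
                                         cos (b + (\<phi>\<^sub>0 + 2*pi*real j/real N) * real q) < 0))"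
proof (cases "N = 0")
  case False
  obtain s where N: "N = q*s" using assms(3) by (elim dvdE)
  have "0 < s" "0 < q" using N False assms(2) by auto
  define H where "H j = (of_bool (cos (a + (\<phi>\<^sub>0 + 2*pi*real j/real N) * real p) *
                                  cos (b + (\<phi>\<^sub>0 + 2*pi*real j/real N) * real q) < 0) :: real)" for j
  have "real q / 4 \<le> (\<Sum>t<q. H (u + s*t))" for u
  proof -
    define X where "X = a + (\<phi>\<^sub>0 + 2*pi*real u/real N) * real p"
    define Y where "Y = b + (\<phi>\<^sub>0 + 2*pi*real u/real N) * real q"
    have "cos X \<noteq> 0" "cos Y \<noteq> 0" using assms(4,5)[of u] by (simp_all add: X_def Y_def)
    have "b + (\<phi>\<^sub>0 + 2*pi*real (u+s*t)/real N) * real q = Y + real (2*t) * pi"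
      and "a + (\<phi>\<^sub>0 + 2*pi*real (u+s*t)/real N) * real p = X + 2*pi*real p*real t/real q" for t
      using \<open>0 < s\<close> \<open>0 < q\<close> by (simp_all add: X_def Y_def N field_simps)
    then have H: "H (u + s*t) = of_bool (cos (X + 2*pi*real p*real t/real q) * cos Y < 0)" for t
      by (simp add: H_def cos_add)
    obtain X' where "cos X' \<noteq> 0"
      and H': "\<And>t. H (u + s*t) = of_bool (cos (X' + 2*pi*real p*real t/real q) < 0)"
    proof (cases "0 < cos Y")
      case True
      then show ?thesis using that[of X] \<open>cos X \<noteq> 0\<close> by (simp add: H mult_less_0_iff)
    next
      case False
      have "cos (X + 2*pi*real p*real t/real q) = - cos ((X + pi) + 2*pi*real p*real t/real q)" for t
        by (metis add.commute add.left_commute cos_periodic_pi minus_minus)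
      with False \<open>cos Y \<noteq> 0\<close> \<open>cos X \<noteq> 0\<close> show ?thesis
        using that[of "X + pi"] by (simp add: H mult_less_0_iff zero_less_mult_iff)
    qed
    show ?thesis
      unfolding H' by (rule quarter_le_count_negative_cos) (use assms(1,2) \<open>cos X' \<noteq> 0\<close> in auto)
  qed
  then have "(\<Sum>u<s. real q / 4) \<le> (\<Sum>u<s. \<Sum>t<q. H (u + s*t))"
    by (rule sum_mono)
  also have "\<dots> = (\<Sum>j<N. H j)" unfolding N by (rule sum_lessThan_mult_by_residue[symmetric])
  finally show ?thesis by (simp only: H_def) (simp add: N mult.commute)
qed simp

lemma quarter_le_grid_sign_changes:
  fixes a b \<phi>\<^sub>0 :: real and p q N :: nat
  assumes "0 < p" "0 < q" "p \<noteq> q" "p dvd N" "q dvd N"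
    and "\<And>j. cos (a + (\<phi>\<^sub>0 + 2*pi*real j/real N) * real p) \<noteq> 0"
    and "\<And>j. cos (b + (\<phi>\<^sub>0 + 2*pi*real j/real N) * real q) \<noteq> 0"
  shows "real N / 4 \<le> (\<Sum>j<N. of_bool (cos (a + (\<phi>\<^sub>0 + 2*pi*real j/real N) * real p) *
                                         cos (b + (\<phi>\<^sub>0 + 2*pi*real j/real N) * real q) < 0))"
proof (cases "p < q")
  case True
  then show ?thesis using quarter_le_grid_sign_changes_less assms by blast
next
  case False
  then have "q < p" using assms(3) by simp
  then show ?thesis
    using quarter_le_grid_sign_changes_less[of q p N b \<phi>\<^sub>0 a] assms by (simp add: mult.commute)
qed

lemma exists_grid_offset_cos_nonzero:
  fixes \<alpha> :: "'i \<Rightarrow> real" and n :: "'i \<Rightarrow> nat" and N :: nat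
  assumes "countable I" "0 < N" "\<And>i. i \<in> I \<Longrightarrow> 0 < n i"
  shows "\<exists>\<phi>\<^sub>0\<in>{0<..<2*pi/real N}. \<forall>i\<in>I. \<forall>j.
           cos (\<alpha> i + (\<phi>\<^sub>0 + 2*pi*real j/real N) * real (n i)) \<noteq> 0"
proof -
  define B where "B = (\<lambda>(i, j, z). (of_int z * (pi/2) - \<alpha> i) / real (n i) - 2*pi*real j/real N) `
                        (I \<times> (UNIV :: nat set) \<times> (UNIV :: int set))"
  have "countable B" using assms(1) by (simp add: B_def)
  moreover have "0 < 2*pi/real N" using assms(2) by simp
  ultimately obtain \<phi>\<^sub>0 where \<phi>\<^sub>0: "\<phi>\<^sub>0 \<in> {0<..<2*pi/real N}" "\<phi>\<^sub>0 \<notin> B"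
    using real_interval_avoid_countable_set by blast
  have "cos (\<alpha> i + (\<phi>\<^sub>0 + 2*pi*real j/real N) * real (n i)) \<noteq> 0" if "i \<in> I" for i j
  proof
    assume "cos (\<alpha> i + (\<phi>\<^sub>0 + 2*pi*real j/real N) * real (n i)) = 0"
    then obtain z where "\<alpha> i + (\<phi>\<^sub>0 + 2*pi*real j/real N) * real (n i) = of_int z * (pi/2)"
      using cos_zero_iff_int by blast
    then have "\<phi>\<^sub>0 = (of_int z * (pi/2) - \<alpha> i) / real (n i) - 2*pi*real j/real N"
      using assms(3)[OF that] by (simp add: field_simps)
    then have "\<phi>\<^sub>0 \<in> B" unfolding B_def using that by (intro image_eqI[where x = "(i, j, z)"]) auto
    then show False using \<phi>\<^sub>0(2) by simp
  qed
  then show ?thesis using \<phi>\<^sub>0(1) by blast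
qed

lemma exists_ge_average:
  fixes V :: "nat \<Rightarrow> real"
  assumes "0 < N" "real N * c \<le> (\<Sum>j<N. V j)"
  shows "\<exists>j<N. c \<le> V j"
proof (rule ccontr)
  assume "\<not> ?thesis"
  then have "(\<Sum>j<N. V j) < (\<Sum>j<N. c)" using assms(1) by (intro sum_strict_mono) auto
  then show False using assms(2) by simp
qed

lemma sign_variations_map_upt:
  "real (sign_variations (map f [1..<k+1])) = (\<Sum>i<k-1. of_bool (f (i+1) * f (i+2) < 0))"
proof -
  have "{i. i + 1 < length (map f [1..<k+1]) \<and> map f [1..<k+1] ! i * map f [1..<k+1] ! (i+1) < 0}
      = {..<k-1} \<inter> {i. f (i+1) * f (i+2) < 0}"
    by (auto simp: nth_upt add.commute simp del: upt_Suc)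
  then show ?thesis by (simp add: sign_variations_def sum_of_bool_eq)
qed

theorem lemma5p5:
  fixes k :: nat and \<alpha> :: "nat \<Rightarrow> real" and n :: "nat \<Rightarrow> nat"
  assumes "k \<ge> 2"
    and "\<And>i. 1 \<le> i \<Longrightarrow> i \<le> k \<Longrightarrow> 0 \<le> \<alpha> i \<and> \<alpha> i < 2 * pi"
    and "\<And>i. 1 \<le> i \<Longrightarrow> i \<le> k \<Longrightarrow> n i > 0"
    and "\<And>i. 1 \<le> i \<Longrightarrow> i \<le> k - 1 \<Longrightarrow> n i \<noteq> n (i + 1)"
  shows "\<exists>\<phi>. 0 \<le> \<phi> \<and> \<phi> < 2 * pi \<and>
    real (sign_variations (map (\<lambda>i. cos (\<alpha> i + \<phi> * real (n i))) [1..<k+1])) \<ge> (real k - 1) / 8"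
proof -
  define N where "N = (\<Prod>i=1..k. n i)"
  have "0 < N" using assms(3) by (simp add: N_def prod_pos)
  have dvd: "n i dvd N" if "i \<in> {1..k}" for i using that by (simp add: N_def dvd_prodI)
  obtain \<phi>\<^sub>0 where \<phi>\<^sub>0: "0 < \<phi>\<^sub>0" "\<phi>\<^sub>0 < 2*pi/real N"
    and nz: "\<And>i j. i \<in> {1..k} \<Longrightarrow> cos (\<alpha> i + (\<phi>\<^sub>0 + 2*pi*real j/real N) * real (n i)) \<noteq> 0"
    using exists_grid_offset_cos_nonzero[of "{1..k}" N n \<alpha>] \<open>0 < N\<close> assms(3) by auto
  define V where "V j = real (sign_variations
    (map (\<lambda>i. cos (\<alpha> i + (\<phi>\<^sub>0 + 2*pi*real j/real N) * real (n i))) [1..<k+1]))" for j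
  have "(\<Sum>i<k-1. real N / 4) \<le> (\<Sum>i<k-1. \<Sum>j<N. of_bool (
          cos (\<alpha> (i+1) + (\<phi>\<^sub>0 + 2*pi*real j/real N) * real (n (i+1))) *
          cos (\<alpha> (i+2) + (\<phi>\<^sub>0 + 2*pi*real j/real N) * real (n (i+2))) < 0))"
    using assms(3,4) by (intro sum_mono quarter_le_grid_sign_changes dvd nz) auto
  also have "\<dots> = (\<Sum>j<N. V j)" unfolding V_def sign_variations_map_upt by (rule sum.swap)
  finally have "real N * ((real k - 1) / 4) \<le> (\<Sum>j<N. V j)"
    using assms(1) by (simp add: of_nat_diff mult.commute)
  then obtain j where "j < N" and j: "(real k - 1) / 4 \<le> V j"
    using exists_ge_average \<open>0 < N\<close> by blast
  have "\<phi>\<^sub>0 + 2*pi*real j/real N < 2*pi*(real j + 1)/real N"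
    using \<phi>\<^sub>0(2) by (simp add: add_divide_distrib algebra_simps)
  also have "\<dots> \<le> 2*pi*real N/real N"
    using \<open>j < N\<close> by (intro divide_right_mono mult_left_mono) auto
  also have "\<dots> = 2*pi" using \<open>0 < N\<close> by simp
  finally show ?thesis using \<phi>\<^sub>0(1) j assms(1) unfolding V_def
    by (intro exI[of _ "\<phi>\<^sub>0 + 2*pi*real j/real N"]) auto
qed

end
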